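(* Let $k\ge 1$ be such that $p=2k+1$ is a prime with $p\ne 3$. Then in $\mathbb{F}_p[q]$: (1) $\gcd(q^{p-1}-1,\,P_{k-1}(q))$ divides $q^4-1$; (2) $\gcd(q^{p+1}-1,\,P_{k-1}(q))$ divides $(q^4-1)(q^3-1)$.
   Context: $P_{k-1}(q)=1+\sum_{l=1}^{k} q^{4l-4}(q^4-q^3-q^2-q)$, reduced modulo $p$. Also $Q_{k-1}(q)=(q^4-1)P_{k-1}(q)=q^{4k+4}-q^{4k+3}-q^{4k+2}-q^{4k+1}+q^3+q^2+q-1$. *)

theory Defs
  imports "Berlekamp_Zassenhaus.Finite_Field" "HOL-Computational_Algebra.Polynomial"
begin

text \<open>P_{k-1}(q) = 1 + sum_{l=1}^{k} q^(4l-4) (q^4 - q^3 - q^2 - q), over any comm ring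
 (in particular over the prime field F_p = 'p mod_ring).\<close>
definition P_poly :: "nat \<Rightarrow> 'a::comm_ring_1 poly" where
  "P_poly k = 1 + (\<Sum>l=1..k. monom 1 (4*l - 4) *
      (monom 1 4 - monom 1 3 - monom 1 2 - monom 1 1))"

end

theory Submission
  imports Defs
begin

(* Write x for the indeterminate and Q_{k-1} = (x^4 - 1) P_{k-1}.  Telescoping the defining
   sum gives the closed form  Q_{k-1} = x^(4k) (x^4 - x^3 - x^2 - x) + (x^3 + x^2 + x - 1).
   (1) Modulo x^(2k) - 1 we have x^(4k) = 1, hence Q_{k-1} = x^4 - 1; so every common divisor
       of x^(2k) - 1 and P_{k-1} divides x^4 - 1.
   (2) Modulo x^(2k+2) - 1 we have x^(4k+4) = 1, hence
       x^3 Q_{k-1} = (x^3 - 1)(x^3 + x^2 + x + 1), and this divides (x^4 - 1)(x^3 - 1).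
   Both congruences are ring identities in an element X with X^2 = x^(4k) resp. x^(4k+4),
   proved below in any commutative ring.  Neither part needs p to be prime, k >= 1 or
   p <> 3: both hold over every field and for every k. *)

lemma gcd_dvd_of_congruent:
  fixes a b c u :: "'a::ring_gcd"
  assumes "b dvd u" and "a dvd u - c"
  shows "gcd a b dvd c"
proof -
  have "gcd a b dvd u" using assms(1) by (meson dvd_trans gcd_dvd2)
  moreover have "gcd a b dvd u - c" using assms(2) by (meson dvd_trans gcd_dvd1)
  ultimately have "gcd a b dvd u - (u - c)" by (rule dvd_diff)
  then show ?thesis by simp
qed

lemma P_poly_Suc:
  "P_poly (Suc k) = P_poly k
     + monom (1::'a::comm_ring_1) 1 ^ (4*k)
       * (monom 1 1 ^ 4 - monom 1 1 ^ 3 - monom 1 1 ^ 2 - monom 1 1)"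
  by (simp add: P_poly_def monom_power)

lemma Q_closed_form:
  fixes x :: "'a::comm_ring_1 poly"
  assumes x: "x = monom 1 1"
  shows "(x^4 - 1) * P_poly k = x^(4*k) * (x^4 - x^3 - x^2 - x) + (x^3 + x^2 + x - 1)"
proof (induction k)
  case 0
  then show ?case by (simp add: P_poly_def algebra_simps)
next
  case (Suc k)
  have step: "P_poly (Suc k) = P_poly k + x^(4*k) * (x^4 - x^3 - x^2 - x)"
    unfolding x by (rule P_poly_Suc)
  have "x^(4 * Suc k) = x^(4*k) * x^4" by (simp add: power_add)
  then show ?case using Suc.IH by (simp add: step algebra_simps)
qed

lemma congruence_square:
  fixes x X :: "'a::comm_ring_1"
  assumes "X * X = y"
  shows "(y * (x^4 - x^3 - x^2 - x) + (x^3 + x^2 + x - 1)) - (x^4 - 1)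
       = (X - 1) * ((X + 1) * (x^4 - x^3 - x^2 - x))"
  using assms[symmetric] by (simp add: algebra_simps)

lemma congruence_shifted_square:
  fixes x X :: "'a::comm_ring_1"
  assumes "X * X = y * x^4"
  shows "x^3 * (y * (x^4 - x^3 - x^2 - x) + (x^3 + x^2 + x - 1))
           - (x^3 - 1) * (x^3 + x^2 + x + 1)
       = (X - 1) * ((X + 1) * (x^3 - x^2 - x - 1))"
proof -
  have "(X - 1) * ((X + 1) * (x^3 - x^2 - x - 1)) = (y * x^4 - 1) * (x^3 - x^2 - x - 1)"
    by (simp add: assms[symmetric] algebra_simps)
  then show ?thesis
    by (simp add: algebra_simps power2_eq_square power3_eq_cube power4_eq_xxxx)
qed

lemma gcd_P_poly_even:
  "gcd (monom (1::'a::field_gcd) (2*k) - 1) (P_poly k) dvd monom 1 4 - 1"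
proof -
  define x :: "'a poly" where "x = monom 1 1"
  have X: "x^(2*k) * x^(2*k) = x^(4*k)" by (simp flip: power_add)
  have "gcd (x^(2*k) - 1) (P_poly k) dvd x^4 - 1"
  proof (rule gcd_dvd_of_congruent)
    show "P_poly k dvd (x^4 - 1) * P_poly k" by simp
    show "x^(2*k) - 1 dvd (x^4 - 1) * P_poly k - (x^4 - 1)"
      unfolding Q_closed_form[OF x_def] congruence_square[OF X] by simp
  qed
  then show ?thesis by (simp only: x_def monom_power power_one mult_1)
qed

lemma gcd_P_poly_even_plus_2:
  "gcd (monom (1::'a::field_gcd) (2*k + 2) - 1) (P_poly k) dvd (monom 1 4 - 1) * (monom 1 3 - 1)"
proof -
  define x :: "'a poly" where "x = monom 1 1"
  have X: "x^(2*k + 2) * x^(2*k + 2) = x^(4*k) * x^4"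
  proof -
    have "(2*k + 2) + (2*k + 2) = 4*k + 4" by simp
    then show ?thesis by (metis power_add)
  qed
  have "gcd (x^(2*k + 2) - 1) (P_poly k) dvd (x^3 - 1) * (x^3 + x^2 + x + 1)"
  proof (rule gcd_dvd_of_congruent)
    show "P_poly k dvd x^3 * ((x^4 - 1) * P_poly k)" by simp
    show "x^(2*k + 2) - 1 dvd x^3 * ((x^4 - 1) * P_poly k) - (x^3 - 1) * (x^3 + x^2 + x + 1)"
      unfolding Q_closed_form[OF x_def] congruence_shifted_square[OF X] by simp
  qed
  also have "(x^3 - 1) * (x^3 + x^2 + x + 1) dvd (x^4 - 1) * (x^3 - 1)"
  proof
    show "(x^4 - 1) * (x^3 - 1) = (x^3 - 1) * (x^3 + x^2 + x + 1) * (x - 1)"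
      by (simp add: algebra_simps power2_eq_square power3_eq_cube power4_eq_xxxx)
  qed
  finally show ?thesis by (simp only: x_def monom_power power_one mult_1)
qed

theorem mainTheorem14:
  fixes k :: nat
  assumes "k \<ge> 1"
    and "CARD('p::prime_card) = 2*k + 1"
    and "CARD('p) \<noteq> 3"
  shows "gcd (monom (1::'p mod_ring) (CARD('p) - 1) - 1) (P_poly k) dvd (monom 1 4 - 1)
       \<and> gcd (monom (1::'p mod_ring) (CARD('p) + 1) - 1) (P_poly k)
           dvd (monom 1 4 - 1) * (monom 1 3 - 1)"
proof -
  have "CARD('p) - 1 = 2*k" and "CARD('p) + 1 = 2*k + 2" using assms(2) by simp_all
  then show ?thesis by (simp only:) (intro conjI gcd_P_poly_even gcd_P_poly_even_plus_2)
qed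

end
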